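(* There exists a frequently hypercyclic weighted backward shift $B_w$ on $c_0(\mathbb Z_+)$ which is not $\overline{\mathcal D}_1$-transitive.
   Context: Weighted backward shift: $B_we_0=0$, $B_we_n=w_ne_{n-1}$ with $(w_n)_{n\ge1}$ bounded. Frequently hypercyclic: some $x$ has $\{n:B_w^nx\in V\}$ of positive lower density for every non-empty open $V$. $\overline{\mathcal D}_1$ is the family of subsets of $\mathbb N$ with upper density equal to $1$. An operator $T$ is $\overline{\mathcal D}_1$-transitive if for every pair of non-empty open sets $U,V$, the set $\{n\in\mathbb N: T^n(U)\cap V\ne\emptyset\}$ belongs to $\overline{\mathcal D}_1$. *)

theory Defs
  imports "HOL-Analysis.Analysis" "HOL-Library.Liminf_Limsup"
begin

definition c0 :: "(nat \<Rightarrow> complex) set" where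
  "c0 = {x. x \<longlonglongrightarrow> 0}"

definition c0_dist :: "(nat \<Rightarrow> complex) \<Rightarrow> (nat \<Rightarrow> complex) \<Rightarrow> real" where
  "c0_dist x y = (SUP n. cmod (x n - y n))"

definition c0_open :: "(nat \<Rightarrow> complex) set \<Rightarrow> bool" where
  "c0_open V \<longleftrightarrow> V \<subseteq> c0 \<and>
     (\<forall>x\<in>V. \<exists>e>0. \<forall>y\<in>c0. c0_dist x y < e \<longrightarrow> y \<in> V)"

text \<open>Weighted backward shift: B_w e_0 = 0, B_w e_n = w_n e_{n-1},
  i.e. (B_w x)_n = w_{n+1} x_{n+1}. (w 0 is irrelevant.)\<close>
definition wshift :: "(nat \<Rightarrow> complex) \<Rightarrow> (nat \<Rightarrow> complex) \<Rightarrow> (nat \<Rightarrow> complex)" where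
  "wshift w x = (\<lambda>n. w (Suc n) * x (Suc n))"

definition lower_density :: "nat set \<Rightarrow> ereal" where
  "lower_density A = liminf (\<lambda>N. ereal (real (card (A \<inter> {1..N})) / real N))"

definition upper_density :: "nat set \<Rightarrow> ereal" where
  "upper_density A = limsup (\<lambda>N. ereal (real (card (A \<inter> {1..N})) / real N))"

definition frequently_hypercyclic_c0 :: "((nat \<Rightarrow> complex) \<Rightarrow> (nat \<Rightarrow> complex)) \<Rightarrow> bool" where
  "frequently_hypercyclic_c0 T \<longleftrightarrow>
     (\<exists>x\<in>c0. \<forall>V. c0_open V \<and> V \<noteq> {} \<longrightarrow> lower_density {n. (T ^^ n) x \<in> V} > 0)"

definition upper_D1_transitive_c0 :: "((nat \<Rightarrow> complex) \<Rightarrow> (nat \<Rightarrow> complex)) \<Rightarrow> bool" where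
  "upper_D1_transitive_c0 T \<longleftrightarrow>
     (\<forall>U V. c0_open U \<and> U \<noteq> {} \<and> c0_open V \<and> V \<noteq> {} \<longrightarrow>
        upper_density {n. \<exists>x\<in>U. (T ^^ n) x \<in> V} = 1)"

end

theory Submission
  imports Defs
begin

text \<open>Write \<open>W n = w 1 * ... * w n\<close> for the weight products, so that
  \<open>(B\<^sup>n x) j = W (j + n) / W j * x (j + n)\<close>. The products double at every step except at
  the return times, where they drop back to 1. Since \<open>(B\<^sup>n x) 0 = x n\<close> at a return time \<open>n\<close>,
  no vector near \<open>e\<^sub>0\<close> is mapped near \<open>e\<^sub>0\<close> there, and the return times have positive
  lower density; this rules out \<open>D\<^sub>1\<close>-transitivity. For frequent hypercyclicity, a dense
  sequence of finitely supported targets is planted in one vector: the \<open>q\<close>-th target, divided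
  by the weight products, sits at every hit time of \<open>q\<close>, a set of positive lower density.
  Between any two hit windows there is a long stretch without return times, so the weights grow
  enough that at a hit time of \<open>q\<close> all other windows contribute less than \<open>1 / (4 (q + 1))\<close>,
  and the planted vector is a null sequence.\<close>

section \<open>The sup metric and densities\<close>

lemma norm_le_c0_dist:
  assumes "x \<in> c0" "y \<in> c0"
  shows "cmod (x n - y n) \<le> c0_dist x y"
proof -
  have "(\<lambda>n. x n - y n) \<longlonglongrightarrow> 0 - 0"
    using assms by (intro tendsto_diff) (auto simp: c0_def)
  then have "Bseq (\<lambda>n. x n - y n)"
    by (intro convergent_imp_Bseq) (auto simp: convergent_def)
  then have "bdd_above (range (\<lambda>n. cmod (x n - y n)))"
    by (auto simp: Bseq_def intro: bdd_aboveI2)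
  then show ?thesis
    unfolding c0_dist_def by (rule cSUP_upper[OF UNIV_I])
qed

lemma c0_dist_le: "(\<And>n. cmod (x n - y n) \<le> e) \<Longrightarrow> c0_dist x y \<le> e"
  unfolding c0_dist_def by (rule cSUP_least) auto

lemma c0_dist_self: "c0_dist x x = 0"
  by (simp add: c0_dist_def)

lemma c0_dist_triangle:
  assumes "x \<in> c0" "y \<in> c0" "z \<in> c0"
  shows "c0_dist x z \<le> c0_dist x y + c0_dist y z"
proof (rule c0_dist_le)
  fix n
  have "cmod (x n - z n) \<le> cmod (x n - y n) + cmod (y n - z n)"
    using norm_triangle_ineq[of "x n - y n" "y n - z n"] by simp
  also have "\<dots> \<le> c0_dist x y + c0_dist y z"
    using norm_le_c0_dist assms by (intro add_mono) auto
  finally show "cmod (x n - z n) \<le> c0_dist x y + c0_dist y z" .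
qed

lemma c0_open_ball:
  assumes "x \<in> c0"
  shows "c0_open {y \<in> c0. c0_dist x y < r}"
  unfolding c0_open_def
proof (intro conjI ballI)
  fix y assume y: "y \<in> {y \<in> c0. c0_dist x y < r}"
  show "\<exists>e>0. \<forall>z\<in>c0. c0_dist y z < e \<longrightarrow> z \<in> {y \<in> c0. c0_dist x y < r}"
  proof (intro exI[of _ "r - c0_dist x y"] conjI ballI impI)
    fix z assume "z \<in> c0" "c0_dist y z < r - c0_dist x y"
    with c0_dist_triangle[OF assms _ \<open>z \<in> c0\<close>, of y] y
    show "z \<in> {y \<in> c0. c0_dist x y < r}" by auto
  qed (use y in auto)
qed auto

lemma lower_density_pos:
  assumes "c > 0" and "\<And>N. N \<ge> N0 \<Longrightarrow> c * real N \<le> real (card (A \<inter> {1..N}))"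
  shows "lower_density A > 0"
proof -
  have "eventually (\<lambda>N. ereal c \<le> ereal (real (card (A \<inter> {1..N})) / real N)) sequentially"
  proof (rule eventually_sequentiallyI[of "max N0 1"])
    fix N assume "max N0 1 \<le> N"
    then show "ereal c \<le> ereal (real (card (A \<inter> {1..N})) / real N)"
      using assms(2)[of N] by (simp add: pos_le_divide_eq)
  qed
  then have "ereal c \<le> lower_density A"
    unfolding lower_density_def by (rule Liminf_bounded)
  with \<open>c > 0\<close> show ?thesis
    by (meson ereal_less(2) less_le_trans)
qed

lemma lower_density_mono: "A \<subseteq> B \<Longrightarrow> lower_density A \<le> lower_density B"
  unfolding lower_density_def
proof (intro Liminf_mono always_eventually allI)
  fix N assume "A \<subseteq> B"
  then have "card (A \<inter> {1..N}) \<le> card (B \<inter> {1..N})" by (intro card_mono) auto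
  then show "ereal (real (card (A \<inter> {1..N})) / real N) \<le> ereal (real (card (B \<inter> {1..N})) / real N)"
    by (simp add: divide_right_mono)
qed

lemma limsup_ereal_cminus:
  fixes f :: "nat \<Rightarrow> ereal"
  assumes "\<bar>c\<bar> \<noteq> \<infinity>"
  shows "limsup (\<lambda>n. c - f n) = c - liminf f"
proof -
  have "limsup (\<lambda>n. c - f n) = (INF k. c - (INF m\<in>{k..}. f m))"
    unfolding limsup_INF_SUP by (intro INF_cong refl SUP_ereal_minus_right) (use assms in auto)
  also have "\<dots> = c - liminf f"
    unfolding liminf_SUP_INF using assms by (simp add: INF_ereal_minus_right)
  finally show ?thesis .
qed

lemma upper_density_le_one_minus_lower_density:
  assumes "A \<inter> B = {}"
  shows "upper_density A \<le> 1 - lower_density B"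
proof -
  have "ereal (real (card (A \<inter> {1..N})) / real N) \<le> 1 - ereal (real (card (B \<inter> {1..N})) / real N)"
    if "N \<ge> 1" for N
  proof -
    have "card (A \<inter> {1..N}) + card (B \<inter> {1..N}) = card ((A \<union> B) \<inter> {1..N})"
      using assms by (subst card_Un_disjoint[symmetric]) (auto simp: Int_Un_distrib2)
    also have "\<dots> \<le> N"
      using card_mono[of "{1..N}" "(A \<union> B) \<inter> {1..N}"] by auto
    finally have "real (card (A \<inter> {1..N})) / real N \<le> 1 - real (card (B \<inter> {1..N})) / real N"
      using that by (simp add: field_simps)
    then show ?thesis
      by (metis ereal_less_eq(3) ereal_minus(1) one_ereal_def)
  qed
  then have "upper_density A \<le> limsup (\<lambda>N. 1 - ereal (real (card (B \<inter> {1..N})) / real N))"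
    unfolding upper_density_def by (intro Limsup_mono eventually_sequentiallyI)
  also have "\<dots> = 1 - lower_density B"
    unfolding lower_density_def by (rule limsup_ereal_cminus) simp
  finally show ?thesis .
qed

lemma strict_mono_bracket:
  fixes f :: "nat \<Rightarrow> nat"
  assumes "strict_mono f" "f 0 \<le> N"
  obtains j where "f j \<le> N" "N < f (Suc j)"
proof (rule ccontr)
  assume "\<not> thesis"
  with that have "f j \<le> N \<Longrightarrow> f (Suc j) \<le> N" for j by (meson not_le)
  then have "f j \<le> N" for j by (induction j) (use assms(2) in auto)
  from this[of "Suc N"] seq_suble[OF assms(1), of "Suc N"] show False by linarith
qed

section \<open>Weighted shifts with quotient weights\<close>

definition quotient_weights :: "(nat \<Rightarrow> real) \<Rightarrow> nat \<Rightarrow> complex" where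
  "quotient_weights W i = complex_of_real (W i / W (i - 1))"

lemma funpow_wshift_quotient_weights:
  assumes "\<And>i. W i \<noteq> 0"
  shows "(wshift (quotient_weights W) ^^ k) x j = complex_of_real (W (j + k) / W j) * x (j + k)"
proof (induction k arbitrary: j)
  case 0
  then show ?case using assms[of j] by simp
next
  case (Suc k)
  have "(wshift (quotient_weights W) ^^ Suc k) x j
      = quotient_weights W (Suc j) * (wshift (quotient_weights W) ^^ k) x (Suc j)"
    by (simp add: wshift_def)
  also have "\<dots> = complex_of_real (W (Suc j) / W j)
      * (complex_of_real (W (Suc j + k) / W (Suc j)) * x (Suc j + k))"
    by (simp only: Suc.IH quotient_weights_def diff_Suc_1)
  also have "\<dots> = complex_of_real (W (j + Suc k) / W j) * x (j + Suc k)"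
    using assms[of "Suc j"] by (simp add: field_simps)
  finally show ?case .
qed

lemma bounded_quotient_weights:
  assumes "\<And>i. 0 < W i" "\<And>i. W (Suc i) \<le> C * W i"
  shows "bounded (range (quotient_weights W))"
proof -
  have "cmod (quotient_weights W i) \<le> max 1 C" for i
  proof (cases i)
    case (Suc j)
    have "W (Suc j) / W j \<le> C"
      using assms(1)[of j] assms(2)[of j] by (simp add: divide_le_eq mult.commute)
    with Suc assms(1)[of j] assms(1)[of i] show ?thesis
      by (simp add: quotient_weights_def norm_divide)
  qed (use assms(1)[of 0] in \<open>simp add: quotient_weights_def\<close>)
  then show ?thesis
    unfolding bounded_iff by blast
qed

lemma wshift_c0:
  assumes "bounded (range w)" "x \<in> c0"
  shows "wshift w x \<in> c0"
proof -
  obtain B where B: "\<And>n. cmod (w n) \<le> B"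
    using assms(1) by (auto simp: bounded_iff)
  have "(\<lambda>n. x (Suc n)) \<longlonglongrightarrow> 0"
    using assms(2) by (simp add: c0_def LIMSEQ_Suc)
  then have "(\<lambda>n. B * cmod (x (Suc n))) \<longlonglongrightarrow> B * 0"
    by (intro tendsto_mult_left tendsto_norm_zero)
  moreover have "\<forall>n. cmod (w (Suc n) * x (Suc n)) \<le> B * cmod (x (Suc n))"
    by (simp add: norm_mult mult_right_mono B)
  ultimately have "wshift w x \<longlonglongrightarrow> 0"
    unfolding wshift_def using Lim_null_comparison[OF always_eventually] by simp
  then show ?thesis
    by (simp add: c0_def)
qed

lemma funpow_wshift_c0: "bounded (range w) \<Longrightarrow> x \<in> c0 \<Longrightarrow> (wshift w ^^ n) x \<in> c0"
  by (induction n) (simp_all add: wshift_c0)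

text \<open>On \<open>S\<close> the first coordinate of \<open>B\<^sup>n x\<close> has modulus at most \<open>\<bar>x n\<bar>\<close>, so the ball
  of radius 1/2 around the first unit vector does not return to itself at times in \<open>S\<close>.\<close>

lemma not_upper_D1_transitive_quotient_weights:
  assumes W_pos: "\<And>i. 0 < W i" and S: "lower_density S > 0"
    and returns: "\<And>n. n \<in> S \<Longrightarrow> 0 < n \<and> W n \<le> W 0"
  shows "\<not> upper_D1_transitive_c0 (wshift (quotient_weights W))"
proof
  define e :: "nat \<Rightarrow> complex" where "e n = (if n = 0 then 1 else 0)" for n
  define U where "U = {y \<in> c0. c0_dist e y < 1/2}"
  let ?B = "wshift (quotient_weights W)"
  let ?R = "{n. \<exists>x\<in>U. (?B ^^ n) x \<in> U}"
  assume "upper_D1_transitive_c0 ?B"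
  moreover have "e \<in> c0"
    unfolding c0_def e_def by (simp, rule tendsto_eventually, rule eventually_sequentiallyI[of 1]) simp
  then have "c0_open U" "U \<noteq> {}"
    unfolding U_def using c0_open_ball[of e "1/2"] c0_dist_self[of e] by auto
  ultimately have "upper_density ?R = 1"
    unfolding upper_D1_transitive_c0_def by blast
  have "n \<notin> ?R" if "n \<in> S" for n
  proof
    assume "n \<in> ?R"
    then obtain x where x: "x \<in> c0" "c0_dist e x < 1/2"
      and Bx: "(?B ^^ n) x \<in> c0" "c0_dist e ((?B ^^ n) x) < 1/2"
      by (auto simp: U_def)
    have "cmod (x n) < 1/2"
      using norm_le_c0_dist[OF \<open>e \<in> c0\<close> x(1), of n] x(2) returns[OF that] by (simp add: e_def)
    moreover have "cmod (1 - (?B ^^ n) x 0) < 1/2"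
      using norm_le_c0_dist[OF \<open>e \<in> c0\<close> Bx(1), of 0] Bx(2) by (simp add: e_def)
    moreover have "cmod ((?B ^^ n) x 0) \<le> cmod (x n)"
    proof -
      have "W i \<noteq> 0" for i using W_pos[of i] by simp
      then have "cmod ((?B ^^ n) x 0) = W n / W 0 * cmod (x n)"
        using W_pos[of 0] W_pos[of n] by (simp add: funpow_wshift_quotient_weights norm_mult norm_divide)
      also have "\<dots> \<le> cmod (x n)"
        using returns[OF that] W_pos[of 0] W_pos[of n] by (intro mult_left_le_one_le) auto
      finally show ?thesis .
    qed
    moreover have "1 \<le> cmod (1 - (?B ^^ n) x 0) + cmod ((?B ^^ n) x 0)"
      using norm_triangle_ineq[of "1 - (?B ^^ n) x 0" "(?B ^^ n) x 0"] by simp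
    ultimately show False by linarith
  qed
  then have "upper_density ?R \<le> 1 - lower_density S"
    by (intro upper_density_le_one_minus_lower_density) blast
  also have "\<dots> < 1"
    using S by (cases "lower_density S") (simp_all add: one_ereal_def)
  finally show False
    using \<open>upper_density ?R = 1\<close> by simp
qed

section \<open>Hit times and return times\<close>

text \<open>With \<open>r = block_scale K\<close>, the cluster \<open>[6 r, 8 r]\<close> contains the hit times of the target
  \<open>q\<close> hosted by \<open>K\<close>, namely the multiples of \<open>spacing q\<close>; here \<open>q\<close> is the 2-adic valuation
  of \<open>K + 1\<close>, so the hosts of each \<open>q\<close> form an arithmetic progression. Differences of hit times in one cluster are multiples of
  \<open>spacing q\<close>, and \<open>near_grid\<close> removes from the return blocks the points close to such
  multiples.\<close>

definition block_scale :: "nat \<Rightarrow> nat" where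
  "block_scale K = 2 ^ (3 * K + 20)"

definition spacing :: "nat \<Rightarrow> nat" where
  "spacing q = 2 ^ (2 * q + 14)"

definition hosts :: "nat \<Rightarrow> nat \<Rightarrow> bool" where
  "hosts K q \<longleftrightarrow> (\<exists>j. Suc K = 2 ^ q * (2 * j + 1))"

definition hit_times :: "nat \<Rightarrow> nat set" where
  "hit_times q = {m. \<exists>K. hosts K q \<and> 6 * block_scale K \<le> m \<and> m + spacing q \<le> 8 * block_scale K
                        \<and> spacing q dvd m}"

definition near_grid :: "nat \<Rightarrow> nat set" where
  "near_grid q = {x. \<exists>k\<ge>1. k * spacing q < x + 2 * q + 2 \<and> x \<le> k * spacing q + q}"

definition return_times :: "nat set" where
  "return_times = (\<Union>K. {9 * block_scale K .. 11 * block_scale K}) - (\<Union>q. near_grid q)"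

lemma block_scale_Suc: "block_scale (Suc K) = 8 * block_scale K"
  by (simp add: block_scale_def power_add mult.commute)

lemma block_scale_add: "block_scale (K + d) = 8 ^ d * block_scale K"
  by (induction d) (simp_all add: block_scale_Suc)

lemma block_scale_pos: "0 < block_scale K"
  by (simp add: block_scale_def)

lemma block_scale_mono: "K \<le> K' \<Longrightarrow> block_scale K \<le> block_scale K'"
  unfolding block_scale_def by (rule power_increasing) auto

lemma block_scale_gap: "K < K' \<Longrightarrow> 8 * block_scale K \<le> block_scale K'"
  using block_scale_mono[of "Suc K" K'] by (simp add: block_scale_Suc)

lemma less_block_scale: "K < block_scale K"
proof -
  have "K < 2 ^ K" by (rule less_exp)
  also have "(2::nat) ^ K \<le> 2 ^ (3 * K + 20)" by (rule power_increasing) auto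
  finally show ?thesis by (simp add: block_scale_def)
qed

lemma cluster_index_mono:
  assumes "6 * block_scale K \<le> n" "n \<le> m" "m < 8 * block_scale K'"
  shows "K \<le> K'"
proof (rule ccontr)
  assume "\<not> K \<le> K'"
  then have "8 * block_scale K' \<le> block_scale K" by (intro block_scale_gap) simp
  with assms show False by simp
qed

lemma cluster_index_unique:
  assumes "6 * block_scale K \<le> i" "i < 8 * block_scale K" "6 * block_scale K' \<le> i" "i < 8 * block_scale K'"
  shows "K = K'"
  using assms cluster_index_mono[of K i i K'] cluster_index_mono[of K' i i K] by simp

lemma pow_two_times_odd_inj: "2 ^ p * (2 * a + 1) = 2 ^ q * (2 * b + (1::nat)) \<Longrightarrow> p = q"
proof (induction p arbitrary: q)
  case 0
  then show ?case by (cases q) (auto, presburger)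
next
  case (Suc p)
  then show ?case
  proof (cases q)
    case 0 with Suc.prems show ?thesis by simp presburger
  next
    case (Suc q') with Suc.prems Suc.IH show ?thesis by simp
  qed
qed

lemma hosts_unique: "hosts K p \<Longrightarrow> hosts K q \<Longrightarrow> p = q"
  unfolding hosts_def using pow_two_times_odd_inj by metis

lemma hosts_le: "hosts K q \<Longrightarrow> q \<le> K"
proof -
  assume "hosts K q"
  then obtain j where "Suc K = 2 ^ q * (2 * j + 1)" by (auto simp: hosts_def)
  then have "2 ^ q \<le> Suc K" by simp
  with less_exp[of q] show ?thesis by linarith
qed

lemma hosts_pow_two_times_odd: "hosts (2 ^ q * (2 * j + 1) - 1) q"
  unfolding hosts_def by (intro exI[of _ j]) simp

lemma spacing_pos: "0 < spacing q"
  by (simp add: spacing_def)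

lemma spacing_dvd_block_scale: "q \<le> K \<Longrightarrow> spacing q dvd block_scale K"
  unfolding spacing_def block_scale_def by (rule le_imp_power_dvd) simp

lemma less_spacing: "3 * q + 2 < spacing q"
proof -
  have "q < 2 ^ q" by (rule less_exp)
  moreover have "(2::nat) ^ q \<le> 2 ^ (2 * q + 12)" by (rule power_increasing) auto
  moreover have "(2::nat) ^ (2 * q + 14) = 4 * 2 ^ (2 * q + 12)" by (simp add: power_add)
  moreover have "(1::nat) \<le> 2 ^ q" by simp
  ultimately show ?thesis unfolding spacing_def by linarith
qed

lemma hit_timesE:
  assumes "m \<in> hit_times q"
  obtains K where "hosts K q" "6 * block_scale K \<le> m" "m + spacing q \<le> 8 * block_scale K" "spacing q dvd m"
  using assms unfolding hit_times_def by blast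

lemma hit_times_index_unique: "m \<in> hit_times p \<Longrightarrow> m \<in> hit_times q \<Longrightarrow> p = q"
proof -
  assume "m \<in> hit_times p" "m \<in> hit_times q"
  then obtain K K' where "hosts K p" "6 * block_scale K \<le> m" "m + spacing p \<le> 8 * block_scale K"
    and "hosts K' q" "6 * block_scale K' \<le> m" "m + spacing q \<le> 8 * block_scale K'"
    by (metis hit_timesE)
  moreover from this have "K = K'"
    using spacing_pos[of p] spacing_pos[of q] by (intro cluster_index_unique[of K m K']) auto
  ultimately show "p = q" using hosts_unique by blast
qed

lemma hit_windows_disjoint:
  assumes "m \<in> hit_times p" "m' \<in> hit_times q" "m \<le> i" "i < m + p" "m' \<le> i" "i < m' + q"
  shows "p = q \<and> m = m'"
proof -
  obtain K where K: "hosts K p" "6 * block_scale K \<le> m" "m + spacing p \<le> 8 * block_scale K" "spacing p dvd m"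
    using assms(1) by (rule hit_timesE)
  obtain K' where K': "hosts K' q" "6 * block_scale K' \<le> m'" "m' + spacing q \<le> 8 * block_scale K'" "spacing q dvd m'"
    using assms(2) by (rule hit_timesE)
  have "p < spacing p" "q < spacing q"
    using less_spacing[of p] less_spacing[of q] by auto
  then have "K = K'"
    using K K' assms by (intro cluster_index_unique[of K i K']) auto
  then have "p = q" using K K' hosts_unique by blast
  moreover have "m = m'"
  proof (rule ccontr)
    assume "m \<noteq> m'"
    have "spacing p dvd max m m' - min m m'"
      using K(4) K'(4) \<open>p = q\<close> by (simp add: dvd_diff_nat max_def min_def)
    then have "spacing p \<le> max m m' - min m m'"
      using \<open>m \<noteq> m'\<close> by (intro dvd_imp_le) auto
    with assms \<open>p < spacing p\<close> \<open>p = q\<close> show False by linarith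
  qed
  ultimately show ?thesis by simp
qed

lemma return_timesE:
  assumes "x \<in> return_times"
  obtains J where "9 * block_scale J \<le> x" "x \<le> 11 * block_scale J"
proof -
  from assms obtain J where "x \<in> {9 * block_scale J .. 11 * block_scale J}"
    unfolding return_times_def by blast
  then show thesis by (intro that) auto
qed

lemma no_return_times_near_cluster: "{2 * block_scale K <..< 9 * block_scale K} \<inter> return_times = {}"
proof -
  have "x \<notin> return_times" if x: "2 * block_scale K < x" "x < 9 * block_scale K" for x
  proof
    assume "x \<in> return_times"
    then obtain J where J: "9 * block_scale J \<le> x" "x \<le> 11 * block_scale J"
      by (rule return_timesE)
    have "J < K"
    proof (rule ccontr)
      assume "\<not> J < K"
      then have "block_scale K \<le> block_scale J" by (simp add: block_scale_mono)
      with J x show False by linarith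
    qed
    then have "8 * block_scale J \<le> block_scale K" by (rule block_scale_gap)
    with J x show False by linarith
  qed
  then show ?thesis by auto
qed

text \<open>Within one cluster the offset \<open>m - n\<close> is a multiple of \<open>spacing q\<close>, excluded from the return
  times by \<open>near_grid\<close>; across clusters the offset lies in the return-free gap below the later
  return block.\<close>

lemma hit_times_gap:
  assumes n: "n \<in> hit_times p" and m: "m \<in> hit_times q" and "n < m"
  shows "p + q + 2 \<le> m - n" and "{m - n - (p + q + 2) <..< m - n + q} \<inter> return_times = {}"
proof -
  obtain Kn where Kn: "hosts Kn p" "6 * block_scale Kn \<le> n" "n + spacing p \<le> 8 * block_scale Kn" "spacing p dvd n"
    using n by (rule hit_timesE)
  obtain Km where Km: "hosts Km q" "6 * block_scale Km \<le> m" "m + spacing q \<le> 8 * block_scale Km" "spacing q dvd m"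
    using m by (rule hit_timesE)
  have "Kn \<le> Km"
    using Kn(2) Km(3) \<open>n < m\<close> spacing_pos[of q] by (intro cluster_index_mono[of Kn n m Km]) auto
  have "p + q + 2 \<le> m - n \<and> {m - n - (p + q + 2) <..< m - n + q} \<inter> return_times = {}"
  proof (cases "Kn = Km")
    case True
    then have "p = q" using Kn(1) Km(1) hosts_unique by blast
    then obtain k where k: "m - n = k * spacing q"
      using Kn(4) Km(4) by (metis dvd_diff_nat dvdE mult.commute)
    with \<open>n < m\<close> have "1 \<le> k" by (cases k) auto
    then have "spacing q \<le> m - n" using k by simp
    moreover have "{m - n - (p + q + 2) <..< m - n + q} \<subseteq> near_grid q"
      unfolding near_grid_def using k \<open>1 \<le> k\<close> \<open>p = q\<close> by (auto intro!: exI[of _ k])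
    ultimately show ?thesis
      using less_spacing[of q] \<open>p = q\<close> by (auto simp: return_times_def)
  next
    case False
    with \<open>Kn \<le> Km\<close> have "8 * block_scale Kn \<le> block_scale Km" by (intro block_scale_gap) simp
    moreover have "p \<le> Km" "q \<le> Km"
      using hosts_le[OF Kn(1)] hosts_le[OF Km(1)] \<open>Kn \<le> Km\<close> by auto
    moreover note less_block_scale[of Km] spacing_pos[of p] spacing_pos[of q]
    ultimately have "p + q + 2 \<le> m - n"
      and "{m - n - (p + q + 2) <..< m - n + q} \<subseteq> {2 * block_scale Km <..< 9 * block_scale Km}"
      using Kn(3) Km(2,3) by auto
    then show ?thesis using no_return_times_near_cluster[of Km] by blast
  qed
  then show "p + q + 2 \<le> m - n" and "{m - n - (p + q + 2) <..< m - n + q} \<inter> return_times = {}"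
    by auto
qed

lemma card_hit_times_cluster:
  assumes "hosts K p"
  shows "2 * block_scale K div spacing p \<le> card (hit_times p \<inter> {1..8 * block_scale K})"
proof -
  let ?r = "block_scale K" and ?Q = "spacing p" and ?n = "2 * block_scale K div spacing p"
  have dvd: "?Q dvd ?r"
    using hosts_le[OF assms] by (rule spacing_dvd_block_scale)
  define f where "f k = 6 * ?r + k * ?Q" for k
  have "f ` {..<?n} \<subseteq> hit_times p \<inter> {1..8 * ?r}"
  proof
    fix m assume "m \<in> f ` {..<?n}"
    then obtain k where k: "k < ?n" and m: "m = f k" by auto
    have "Suc k * ?Q \<le> ?n * ?Q"
      using k by (intro mult_right_mono) auto
    also have "\<dots> = 2 * ?r"
      using dvd by simp
    finally have "k * ?Q + ?Q \<le> 2 * ?r" by simp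
    moreover have "?Q dvd m"
      using dvd unfolding m f_def by simp
    ultimately show "m \<in> hit_times p \<inter> {1..8 * ?r}"
      using assms block_scale_pos[of K] unfolding hit_times_def m f_def by auto
  qed
  moreover have "inj_on f {..<?n}"
    unfolding f_def inj_on_def using spacing_pos[of p] by simp
  ultimately show ?thesis
    using card_mono[of "hit_times p \<inter> {1..8 * ?r}" "f ` {..<?n}"] card_image[of f "{..<?n}"] by simp
qed

lemma lower_density_hit_times: "lower_density (hit_times p) > 0"
proof -
  define K :: "nat \<Rightarrow> nat" where "K j = 2 ^ p * (2 * j + 1) - 1" for j
  define C :: nat where "C = 8 ^ (2 ^ (p + 1))"
  define f where "f j = 8 * block_scale (K j)" for j
  have "1 < C" "0 < C"
    unfolding C_def by (intro one_less_power) auto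
  have scale_K_Suc: "block_scale (K (Suc j)) = C * block_scale (K j)" for j
  proof -
    have "K (Suc j) = K j + 2 ^ (p + 1)"
      using mult_le_mono[of 1 "2 ^ p" 1 "2 * j + 1"] by (simp add: K_def algebra_simps)
    then show ?thesis by (simp add: block_scale_add C_def)
  qed
  have "strict_mono f"
    unfolding strict_mono_Suc_iff f_def scale_K_Suc
    using \<open>1 < C\<close> block_scale_pos by simp
  define c where "c = 1 / (4 * real (spacing p) * real C)"
  have "c > 0"
    unfolding c_def using \<open>0 < C\<close> spacing_pos[of p] by simp
  moreover have "c * real N \<le> real (card (hit_times p \<inter> {1..N}))" if "N \<ge> f 0" for N
  proof -
    obtain j where j: "f j \<le> N" "N < f (Suc j)"
      using strict_mono_bracket[OF \<open>strict_mono f\<close> \<open>N \<ge> f 0\<close>] .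
    let ?r = "block_scale (K j)"
    have hosts: "hosts (K j) p"
      using hosts_pow_two_times_odd[of p j] by (simp add: K_def)
    have "real N \<le> 8 * real C * real ?r"
    proof -
      have "N \<le> 8 * C * ?r"
        using j(2) unfolding f_def scale_K_Suc by simp
      then have "real N \<le> real (8 * C * ?r)"
        by (rule of_nat_mono)
      then show ?thesis by simp
    qed
    then have "c * real N \<le> c * (8 * real C * real ?r)"
      using \<open>c > 0\<close> by simp
    also have "\<dots> = 2 * real ?r / real (spacing p)"
      unfolding c_def using \<open>0 < C\<close> spacing_pos[of p] by (simp add: field_simps)
    also have "\<dots> = real (2 * ?r div spacing p)"
      using spacing_dvd_block_scale[OF hosts_le[OF hosts]] by (simp add: real_of_nat_div)
    also have "2 * ?r div spacing p \<le> card (hit_times p \<inter> {1..8 * ?r})"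
      by (rule card_hit_times_cluster[OF hosts])
    also have "\<dots> \<le> card (hit_times p \<inter> {1..N})"
      using j(1) unfolding f_def by (intro card_mono) auto
    finally show ?thesis by simp
  qed
  ultimately show ?thesis
    by (rule lower_density_pos)
qed

lemma card_multiples_between:
  assumes "0 < (Q::nat)"
  shows "card {k. a \<le> k * Q \<and> k * Q \<le> b} \<le> (b - a) div Q + 2"
proof (cases "a \<le> b")
  case True
  have "{k. a \<le> k * Q \<and> k * Q \<le> b} \<subseteq> {a div Q .. b div Q}"
    using assms div_le_mono[of a _ Q] div_le_mono[of _ b Q] by fastforce
  then have "card {k. a \<le> k * Q \<and> k * Q \<le> b} \<le> b div Q + 1 - a div Q"
    using card_mono[of "{a div Q .. b div Q}"] by fastforce
  also have "b div Q \<le> (b - a) div Q + a div Q + 1"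
  proof -
    have "(b - a) mod Q + a mod Q < 2 * Q"
      using mod_less_divisor[OF assms, of "b - a"] mod_less_divisor[OF assms, of a] by linarith
    then have "((b - a) mod Q + a mod Q) div Q < 2"
      by (simp add: less_mult_imp_div_less)
    then show ?thesis
      using div_add1_eq[of "b - a" a Q] True by simp
  qed
  then have "b div Q + 1 - a div Q \<le> (b - a) div Q + 2" by simp
  finally show ?thesis .
next
  case False
  then have "{k. a \<le> k * Q \<and> k * Q \<le> b} = {}" by auto
  then show ?thesis by (simp only: card.empty)
qed

lemma card_near_grid_le:
  "card (near_grid q \<inter> {a..b}) \<le> ((b + 2 * q + 1 - (a - q)) div spacing q + 2) * (3 * q + 2)"
proof -
  let ?Q = "spacing q"
  define ks where "ks = {k. a - q \<le> k * ?Q \<and> k * ?Q \<le> b + 2 * q + 1}"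
  have "near_grid q \<inter> {a..b} \<subseteq> (\<lambda>(k, i). k * ?Q + i - (2 * q + 1)) ` (ks \<times> {..<3 * q + 2})"
  proof
    fix x assume "x \<in> near_grid q \<inter> {a..b}"
    then obtain k where "k * ?Q < x + 2 * q + 2" "x \<le> k * ?Q + q" "a \<le> x" "x \<le> b"
      by (auto simp: near_grid_def)
    then have "k \<in> ks" "x + 2 * q + 1 - k * ?Q < 3 * q + 2"
        "x = k * ?Q + (x + 2 * q + 1 - k * ?Q) - (2 * q + 1)"
      by (auto simp: ks_def)
    then show "x \<in> (\<lambda>(k, i). k * ?Q + i - (2 * q + 1)) ` (ks \<times> {..<3 * q + 2})"
      by (intro image_eqI[of _ _ "(k, x + 2 * q + 1 - k * ?Q)"]) auto
  qed
  moreover have "finite ks"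
  proof (rule finite_subset)
    show "ks \<subseteq> {..b + 2 * q + 1}"
    proof
      fix k assume "k \<in> ks"
      have "k \<le> k * ?Q"
        using spacing_pos[of q] by (cases ?Q) simp_all
      also have "\<dots> \<le> b + 2 * q + 1"
        using \<open>k \<in> ks\<close> by (simp add: ks_def)
      finally show "k \<in> {..b + 2 * q + 1}" by simp
    qed
  qed simp
  ultimately have "card (near_grid q \<inter> {a..b})
      \<le> card ((\<lambda>(k, i). k * ?Q + i - (2 * q + 1)) ` (ks \<times> {..<3 * q + 2}))"
    by (intro card_mono finite_imageI finite_cartesian_product) auto
  also have "\<dots> \<le> card (ks \<times> {..<3 * q + 2})"
    by (rule card_image_le) (simp add: \<open>finite ks\<close>)
  also have "\<dots> = card ks * (3 * q + 2)"
    by (simp add: card_cartesian_product)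
  also have "\<dots> \<le> ((b + 2 * q + 1 - (a - q)) div ?Q + 2) * (3 * q + 2)"
    unfolding ks_def using card_multiples_between[OF spacing_pos] by (rule mult_le_mono1)
  finally show ?thesis .
qed

lemma near_grid_disjoint_block:
  assumes "2 * K + 6 \<le> q"
  shows "near_grid q \<inter> {9 * block_scale K .. 11 * block_scale K} = {}"
proof -
  have "(2::nat) ^ (4 * K + 25) \<le> 2 ^ (2 * q + 13)"
    using assms by (intro power_increasing) auto
  moreover have "(2::nat) ^ (4 * K + 25) = 2 ^ (K + 5) * block_scale K"
    by (simp add: block_scale_def flip: power_add)
  moreover have "11 * block_scale K \<le> 2 ^ (K + 5) * block_scale K"
    using power_increasing[of 5 "K + 5" "2::nat"] by (intro mult_right_mono) auto
  moreover have "2 * q + 2 \<le> (2::nat) ^ (2 * q + 13)"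
    using less_exp[of "2 * q + 13"] by linarith
  moreover have "spacing q = 2 ^ (2 * q + 13) + 2 ^ (2 * q + 13)"
  proof -
    have "2 * q + 14 = Suc (2 * q + 13)" by simp
    then show ?thesis by (simp only: spacing_def power_Suc mult_2)
  qed
  ultimately have bound: "11 * block_scale K + 2 * q + 2 \<le> spacing q"
    by linarith
  have "x \<notin> near_grid q" if "x \<le> 11 * block_scale K" for x
  proof
    assume "x \<in> near_grid q"
    then obtain k where "1 \<le> k" "k * spacing q < x + 2 * q + 2"
      by (auto simp: near_grid_def)
    moreover have "spacing q \<le> k * spacing q"
      using \<open>1 \<le> k\<close> by simp
    ultimately show False
      using bound that by linarith
  qed
  then show ?thesis by auto
qed

lemma card_near_grid_block:
  "real (card (near_grid q \<inter> {9 * block_scale K .. 11 * block_scale K}))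
     \<le> (2 * real (block_scale K) / real (spacing q) + 3) * (3 * q + 2)"
proof -
  let ?r = "block_scale K" and ?Q = "spacing q"
  let ?d = "11 * ?r + 2 * q + 1 - (9 * ?r - q)"
  have Q: "0 < real ?Q" "real (3 * q + 1) / real ?Q \<le> 1"
    using spacing_pos[of q] less_spacing[of q] by simp_all
  have "?d \<le> 2 * ?r + (3 * q + 1)"
    by linarith
  have "real (?d div ?Q) \<le> real ?d / real ?Q"
    by (rule of_nat_div_le_of_nat)
  also have "\<dots> \<le> real (2 * ?r + (3 * q + 1)) / real ?Q"
    using \<open>?d \<le> 2 * ?r + (3 * q + 1)\<close> Q(1) by (intro divide_right_mono) simp_all
  also have "\<dots> = 2 * real ?r / real ?Q + real (3 * q + 1) / real ?Q"
    by (simp add: add_divide_distrib)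
  also have "\<dots> \<le> 2 * real ?r / real ?Q + 1"
    using Q(2) by simp
  finally have "real (?d div ?Q + 2) \<le> 2 * real ?r / real ?Q + 3"
    by simp
  then have "real ((?d div ?Q + 2) * (3 * q + 2)) \<le> (2 * real ?r / real ?Q + 3) * (3 * q + 2)"
    unfolding of_nat_mult by (rule mult_right_mono) simp
  moreover have "real (card (near_grid q \<inter> {9 * ?r .. 11 * ?r})) \<le> real ((?d div ?Q + 2) * (3 * q + 2))"
    using card_near_grid_le[of q "9 * ?r" "11 * ?r"] by (rule of_nat_mono)
  ultimately show ?thesis
    by linarith
qed

lemma three_mult_add_two_le_pow: "3 * q + 2 \<le> 4 * (2::nat) ^ q"
proof (induction q)
  case (Suc q)
  have "(1::nat) \<le> 2 ^ q" by simp
  with Suc.IH have "3 * q + 5 \<le> 8 * (2::nat) ^ q" by linarith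
  then show ?case by simp
qed simp

lemma sum_near_grid_le:
  fixes r :: real
  assumes "0 \<le> r"
  shows "(\<Sum>q<n. 2 * r / real (spacing q) * (3 * q + 2)) \<le> r / 2 ^ 10"
proof -
  have term_le: "2 * r / real (spacing q) * (3 * q + 2) \<le> r / 2 ^ 11 * (1 / 2) ^ q" for q
  proof -
    have "spacing q = 2 ^ q * 2 ^ q * 2 ^ 14"
      unfolding spacing_def by (simp only: power_add mult_2)
    then have Qe: "real (spacing q) = 2 ^ q * 2 ^ q * 2 ^ 14"
      by simp
    have "real (3 * q + 2) \<le> real (4 * (2::nat) ^ q)"
      by (rule of_nat_mono[OF three_mult_add_two_le_pow])
    then have "2 * r / real (spacing q) * (3 * q + 2) \<le> 2 * r / real (spacing q) * (4 * 2 ^ q)"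
      using assms by (intro mult_left_mono) simp_all
    also have "\<dots> = r / 2 ^ 11 * (1 / 2) ^ q"
      unfolding Qe by (simp add: power_one_over)
    finally show ?thesis .
  qed
  have "(\<Sum>q<n. 2 * r / real (spacing q) * (3 * q + 2)) \<le> (\<Sum>q<n. r / 2 ^ 11 * (1 / 2) ^ q)"
    using term_le by (rule sum_mono)
  also have "\<dots> = r / 2 ^ 11 * (\<Sum>q<n. (1 / 2) ^ q)"
    by (rule sum_distrib_left[symmetric])
  also have "\<dots> \<le> r / 2 ^ 11 * 2"
    using assms by (intro mult_left_mono) (simp_all add: sum_gp_strict)
  finally show ?thesis by simp
qed

lemma sum_near_grid_const_le: "2 * (\<Sum>q<2 * K + 6. 3 * (3 * q + 2)) \<le> block_scale K"
proof -
  have "(\<Sum>q<2 * K + 6. 3 * (3 * q + 2)) \<le> (\<Sum>q<2 * K + 6. 18 * K + 60)"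
    by (rule sum_mono) simp
  also have "\<dots> = (2 * K + 6) * (18 * K + 60)"
    by simp
  also have "\<dots> \<le> 2 ^ (K + 3) * 2 ^ (K + 7)"
  proof (rule mult_mono)
    have "K < 2 ^ K" "(1::nat) \<le> 2 ^ K"
      using less_exp[of K] by simp_all
    moreover have "(2::nat) ^ (K + 3) = 8 * 2 ^ K" "(2::nat) ^ (K + 7) = 128 * 2 ^ K"
      by (simp_all add: power_add)
    ultimately show "2 * K + 6 \<le> (2::nat) ^ (K + 3)" "18 * K + 60 \<le> (2::nat) ^ (K + 7)"
      by linarith+
  qed simp_all
  also have "\<dots> = 2 ^ (2 * K + 10)"
    by (simp flip: power_add)
  finally have "2 * (\<Sum>q<2 * K + 6. 3 * (3 * q + 2)) \<le> 2 * 2 ^ (2 * K + 10)"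
    by simp
  also have "\<dots> = 2 ^ (2 * K + 11)"
    by (simp add: power_add)
  also have "\<dots> \<le> block_scale K"
    unfolding block_scale_def by (rule power_increasing) simp_all
  finally show ?thesis .
qed

lemma card_near_grid_union_block:
  "real (card ((\<Union>q. near_grid q) \<inter> {9 * block_scale K .. 11 * block_scale K}))
     \<le> real (block_scale K)"
proof -
  let ?r = "block_scale K" and ?B = "{9 * block_scale K .. 11 * block_scale K}" and ?n = "2 * K + 6"
  have "near_grid q \<inter> ?B = {}" if "\<not> q < ?n" for q
    using that by (intro near_grid_disjoint_block) simp
  then have "(\<Union>q. near_grid q) \<inter> ?B = (\<Union>q<?n. near_grid q \<inter> ?B)"
    by blast
  then have "card ((\<Union>q. near_grid q) \<inter> ?B) \<le> (\<Sum>q<?n. card (near_grid q \<inter> ?B))"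
    using card_UN_le[of "{..<?n}" "\<lambda>q. near_grid q \<inter> ?B"] by simp
  then have "real (card ((\<Union>q. near_grid q) \<inter> ?B)) \<le> (\<Sum>q<?n. real (card (near_grid q \<inter> ?B)))"
    by (metis of_nat_le_iff of_nat_sum)
  also have "\<dots> \<le> (\<Sum>q<?n. (2 * real ?r / real (spacing q) + 3) * (3 * q + 2))"
    by (rule sum_mono) (rule card_near_grid_block)
  also have "\<dots> = (\<Sum>q<?n. 2 * real ?r / real (spacing q) * (3 * q + 2)) + real (\<Sum>q<?n. 3 * (3 * q + 2))"
    by (simp add: sum.distrib distrib_right)
  also have "\<dots> \<le> real ?r / 2 ^ 10 + real ?r / 2"
  proof (rule add_mono)
    show "(\<Sum>q<?n. 2 * real ?r / real (spacing q) * (3 * q + 2)) \<le> real ?r / 2 ^ 10"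
      by (rule sum_near_grid_le) simp
    have "real (2 * (\<Sum>q<?n. 3 * (3 * q + 2))) \<le> real ?r"
      by (rule of_nat_mono[OF sum_near_grid_const_le])
    then show "real (\<Sum>q<?n. 3 * (3 * q + 2)) \<le> real ?r / 2"
      by simp
  qed
  also have "\<dots> \<le> real ?r"
    by simp
  finally show ?thesis .
qed

lemma card_return_times_block: "block_scale K \<le> card (return_times \<inter> {9 * block_scale K .. 11 * block_scale K})"
proof -
  let ?B = "{9 * block_scale K .. 11 * block_scale K}"
  have "return_times \<inter> ?B = ?B - (\<Union>q. near_grid q) \<inter> ?B"
    unfolding return_times_def by blast
  moreover have "card (?B - (\<Union>q. near_grid q) \<inter> ?B) = card ?B - card ((\<Union>q. near_grid q) \<inter> ?B)"
    by (rule card_Diff_subset) auto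
  moreover have "card ((\<Union>q. near_grid q) \<inter> ?B) \<le> block_scale K"
    using card_near_grid_union_block[of K] by linarith
  ultimately show ?thesis
    by simp
qed

lemma lower_density_return_times: "lower_density return_times > 0"
proof (rule lower_density_pos)
  fix N assume "N \<ge> 11 * block_scale 0"
  have "strict_mono (\<lambda>K. 11 * block_scale K)"
    unfolding strict_mono_Suc_iff using block_scale_pos by (simp add: block_scale_Suc)
  then obtain K where K: "11 * block_scale K \<le> N" "N < 11 * block_scale (Suc K)"
    using strict_mono_bracket \<open>N \<ge> 11 * block_scale 0\<close> by blast
  have "block_scale K \<le> card (return_times \<inter> {9 * block_scale K .. 11 * block_scale K})"
    by (rule card_return_times_block)
  also have "\<dots> \<le> card (return_times \<inter> {1..N})"
    using K(1) block_scale_pos[of K] by (intro card_mono) auto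
  finally show "1 / 88 * real N \<le> real (card (return_times \<inter> {1..N}))"
    using K(2) by (simp add: block_scale_Suc)
qed simp

section \<open>The weight products and the orbit vector\<close>

fun weight_prod :: "nat \<Rightarrow> real" where
  "weight_prod 0 = 1"
| "weight_prod (Suc i) = (if Suc i \<in> return_times then 1 else 2 * weight_prod i)"

lemma weight_prod_ge_1: "1 \<le> weight_prod i"
  by (induction i) auto

lemma weight_prod_pos: "0 < weight_prod i"
  using weight_prod_ge_1[of i] by linarith

lemma weight_prod_Suc_le: "weight_prod (Suc i) \<le> 2 * weight_prod i"
  using weight_prod_ge_1[of i] by auto

lemma weight_prod_add_le: "weight_prod (i + k) \<le> 2 ^ k * weight_prod i"
proof (induction k)
  case (Suc k)
  have "weight_prod (i + Suc k) \<le> 2 * weight_prod (i + k)"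
    using weight_prod_Suc_le[of "i + k"] by simp
  also have "\<dots> \<le> 2 * (2 ^ k * weight_prod i)"
    using Suc by simp
  finally show ?case by simp
qed simp

lemma weight_prod_le_pow: "weight_prod i \<le> 2 ^ i"
  using weight_prod_add_le[of 0 i] by simp

lemma weight_prod_return_time: "i \<in> return_times \<Longrightarrow> weight_prod i = 1"
  by (cases i) auto

lemma weight_prod_return_free:
  assumes "{a<..b} \<inter> return_times = {}" "a \<le> b"
  shows "weight_prod b = 2 ^ (b - a) * weight_prod a"
  using assms
proof (induction b)
  case (Suc b)
  show ?case
  proof (cases "a = Suc b")
    case False
    with Suc.prems have "a \<le> b" "Suc b \<notin> return_times" "{a<..b} \<inter> return_times = {}"
      by (auto simp: disjoint_iff)
    with Suc.IH show ?thesis by (simp add: Suc_diff_le)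
  qed simp
qed simp

lemma funpow_wshift_weight_prod:
  "(wshift (quotient_weights weight_prod) ^^ k) x j
     = complex_of_real (weight_prod (j + k) / weight_prod j) * x (j + k)"
  using weight_prod_pos by (intro funpow_wshift_quotient_weights) (simp add: less_imp_neq[symmetric])

lemma bounded_quotient_weights_weight_prod: "bounded (range (quotient_weights weight_prod))"
  using weight_prod_pos weight_prod_Suc_le by (rule bounded_quotient_weights)

definition complex_of_rat_pair :: "rat \<times> rat \<Rightarrow> complex" where
  "complex_of_rat_pair r = Complex (of_rat (fst r)) (of_rat (snd r))"

text \<open>The second component of \<open>prod_decode q\<close> is unused, so every list of Gaussian rationals is
  the code of targets with arbitrarily large index.\<close>

definition target :: "nat \<Rightarrow> nat \<Rightarrow> complex" where
  "target q t = (let L = (from_nat (fst (prod_decode q)) :: (rat \<times> rat) list) in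
     if t < length L \<and> length L \<le> q \<and> cmod (complex_of_rat_pair (L ! t)) \<le> real q
     then complex_of_rat_pair (L ! t) else 0)"

lemma target_eq_0: "q \<le> t \<Longrightarrow> target q t = 0"
  by (auto simp: target_def Let_def)

lemma norm_target_le: "cmod (target q t) \<le> real q"
  by (auto simp: target_def Let_def)

lemma exists_target_code: "\<exists>q\<ge>j. from_nat (fst (prod_decode q)) = L"
  by (intro exI[of _ "prod_encode (to_nat L, j)"]) (simp add: le_prod_encode_2)

lemma exists_rat_pair_approx:
  assumes "e > 0"
  shows "\<exists>r. cmod (complex_of_rat_pair r - z) \<le> e"
proof -
  obtain a where a: "a \<in> \<rat>" "Re z - e / 2 < a" "a < Re z + e / 2"
    using Rats_dense_in_real[of "Re z - e / 2" "Re z + e / 2"] assms by auto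
  obtain b where b: "b \<in> \<rat>" "Im z - e / 2 < b" "b < Im z + e / 2"
    using Rats_dense_in_real[of "Im z - e / 2" "Im z + e / 2"] assms by auto
  obtain a' b' where "a = of_rat a'" "b = of_rat b'"
    using a(1) b(1) by (auto elim!: Rats_cases)
  then have "cmod (complex_of_rat_pair (a', b') - z) \<le> \<bar>a - Re z\<bar> + \<bar>b - Im z\<bar>"
    using cmod_le[of "complex_of_rat_pair (a', b') - z"] by (simp add: complex_of_rat_pair_def)
  with a b show ?thesis by (intro exI[of _ "(a', b')"]) linarith
qed

lemma target_approx:
  assumes "v \<in> c0" "e > 0"
  obtains q where "\<And>t. cmod (target q t - v t) \<le> e" "1 / (4 * (real q + 1)) \<le> e"
proof -
  obtain T where T: "\<And>t. T \<le> t \<Longrightarrow> cmod (v t) < e"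
    using assms tendstoD[of v 0 sequentially e] by (auto simp: c0_def eventually_sequentially)
  have "\<forall>t. \<exists>r. cmod (complex_of_rat_pair r - v t) \<le> e"
    using exists_rat_pair_approx[OF \<open>e > 0\<close>] by blast
  then obtain r where r: "\<And>t. cmod (complex_of_rat_pair (r t) - v t) \<le> e"
    by metis
  define L where "L = map r [0..<T]"
  define bound where "bound = (\<Sum>t<T. cmod (complex_of_rat_pair (r t)))"
  obtain q where q: "T + nat \<lceil>bound\<rceil> + nat \<lceil>1 / e\<rceil> \<le> q" "from_nat (fst (prod_decode q)) = L"
    using exists_target_code by blast
  have "target q t = (if t < T then complex_of_rat_pair (r t) else 0)" for t
  proof -
    have "cmod (complex_of_rat_pair (r t)) \<le> bound" if "t < T"
      unfolding bound_def using that by (intro member_le_sum) auto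
    moreover have "bound \<le> real q" using q(1) by linarith
    ultimately show ?thesis
      using q by (auto simp: target_def L_def)
  qed
  then have "cmod (target q t - v t) \<le> e" for t
    using r[of t] T[of t] by (cases "t < T") auto
  moreover have "1 / (4 * (real q + 1)) \<le> e"
  proof -
    have "1 / e \<le> real q" using q(1) by linarith
    with \<open>e > 0\<close> show ?thesis by (simp add: field_simps)
  qed
  ultimately show thesis by (rule that)
qed

definition in_window :: "nat \<Rightarrow> nat \<Rightarrow> nat \<Rightarrow> bool" where
  "in_window q m i \<longleftrightarrow> m \<in> hit_times q \<and> m \<le> i \<and> i < m + q"

text \<open>On the window of a hit time \<open>m\<close> of target \<open>q\<close>, the weight products are divided out, so
  that \<open>B\<^sup>m\<close> of the orbit vector begins with the target.\<close>

definition orbit_vector :: "nat \<Rightarrow> complex" where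
  "orbit_vector i = (if \<exists>q m. in_window q m i then
     (case THE (q, m). in_window q m i of (q, m) \<Rightarrow>
        target q (i - m) * complex_of_real (weight_prod (i - m) / weight_prod i))
     else 0)"

lemma in_window_unique: "in_window q m i \<Longrightarrow> in_window q' m' i \<Longrightarrow> q = q' \<and> m = m'"
  unfolding in_window_def using hit_windows_disjoint by blast

lemma orbit_vector_in_window:
  assumes "in_window q m i"
  shows "orbit_vector i = target q (i - m) * complex_of_real (weight_prod (i - m) / weight_prod i)"
proof -
  have "(THE (q, m). in_window q m i) = (q, m)"
    using assms in_window_unique by (intro the_equality) auto
  with assms show ?thesis
    unfolding orbit_vector_def by auto
qed

lemma orbit_vector_outside_windows: "(\<And>q m. \<not> in_window q m i) \<Longrightarrow> orbit_vector i = 0"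
  unfolding orbit_vector_def by auto

lemma weight_prod_in_cluster:
  assumes "2 * block_scale K \<le> i" "i < 9 * block_scale K"
  shows "2 ^ (i - 2 * block_scale K) \<le> weight_prod i"
proof -
  have "{2 * block_scale K<..i} \<subseteq> {2 * block_scale K<..<9 * block_scale K}"
    using assms(2) by auto
  then have "{2 * block_scale K<..i} \<inter> return_times = {}"
    using no_return_times_near_cluster[of K] by blast
  then have "weight_prod i = 2 ^ (i - 2 * block_scale K) * weight_prod (2 * block_scale K)"
    using assms(1) by (rule weight_prod_return_free)
  with weight_prod_ge_1[of "2 * block_scale K"] show ?thesis by simp
qed

lemma eight_mult_square_le_pow: "2 \<le> (r::nat) \<Longrightarrow> 8 * (r * r) \<le> 2 ^ (4 * r)"
proof -
  assume "2 \<le> r"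
  have "r * r \<le> 2 ^ r * 2 ^ r"
    using less_exp[of r] by (intro mult_mono) auto
  moreover have "(8::nat) \<le> 2 ^ (2 * r)"
    using power_increasing[of 3 "2 * r" "2::nat"] \<open>2 \<le> r\<close> by simp
  ultimately have "8 * (r * r) \<le> 2 ^ (2 * r) * 2 ^ (2 * r)"
    by (intro mult_mono) (auto simp flip: power_add mult_2)
  then show ?thesis by (simp flip: power_add)
qed

lemma norm_orbit_vector_le: "cmod (orbit_vector i) \<le> 1 / (real i + 1)"
proof (cases "\<exists>q m. in_window q m i")
  case True
  then obtain q m where w: "in_window q m i" by blast
  then have m: "m \<in> hit_times q" "m \<le> i" "i < m + q"
    by (auto simp: in_window_def)
  then obtain K where K: "hosts K q" "6 * block_scale K \<le> m" "m + spacing q \<le> 8 * block_scale K"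
    by (metis hit_timesE)
  let ?r = "block_scale K"
  have "i < 8 * ?r" using m K less_spacing[of q] by linarith
  have "cmod (orbit_vector i) = cmod (target q (i - m)) * (weight_prod (i - m) / weight_prod i)"
    using weight_prod_pos[of "i - m"] weight_prod_pos[of i]
    by (simp add: orbit_vector_in_window[OF w] norm_mult norm_divide)
  also have "\<dots> \<le> real q * (2 ^ (i - m) / 2 ^ (i - 2 * ?r))"
    using weight_prod_le_pow[of "i - m"] weight_prod_in_cluster[of K i] m K \<open>i < 8 * ?r\<close>
      weight_prod_pos[of "i - m"] weight_prod_pos[of i]
    by (intro mult_mono norm_target_le frac_le) simp_all
  also have "2 ^ (i - m) / 2 ^ (i - 2 * ?r) = (1::real) / 2 ^ (m - 2 * ?r)"
  proof -
    have "i - 2 * ?r = (i - m) + (m - 2 * ?r)" using m K by linarith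
    then show ?thesis by (simp add: power_add)
  qed
  also have "real q * (1 / 2 ^ (m - 2 * ?r)) \<le> real q / 2 ^ (4 * ?r)"
  proof -
    have "(2::real) ^ (4 * ?r) \<le> 2 ^ (m - 2 * ?r)" using K by (intro power_increasing) auto
    then show ?thesis by (simp add: frac_le)
  qed
  also have "\<dots> \<le> 1 / (real i + 1)"
  proof -
    have "2 \<le> ?r" using power_increasing[of 1 "3 * K + 20" "2::nat"] by (simp add: block_scale_def)
    have "q * (i + 1) \<le> ?r * (8 * ?r)"
      using hosts_le[OF K(1)] less_block_scale[of K] \<open>i < 8 * ?r\<close> by (intro mult_mono) auto
    also have "\<dots> \<le> 2 ^ (4 * ?r)"
      using eight_mult_square_le_pow[OF \<open>2 \<le> ?r\<close>] by simp
    finally have "real (q * (i + 1)) \<le> real (2 ^ (4 * ?r))"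
      by (rule of_nat_mono)
    then have "real q * (real i + 1) \<le> 2 ^ (4 * ?r)"
      by (simp add: algebra_simps)
    then show ?thesis by (simp add: field_simps)
  qed
  finally show ?thesis .
qed (simp add: orbit_vector_outside_windows)

lemma orbit_vector_c0: "orbit_vector \<in> c0"
proof -
  have "(\<lambda>n. 1 / (real n + 1)) \<longlonglongrightarrow> 0"
    using LIMSEQ_inverse_real_of_nat by (simp add: inverse_eq_divide add.commute)
  then have "orbit_vector \<longlonglongrightarrow> 0"
    by (rule Lim_null_comparison[OF always_eventually, rotated]) (simp add: norm_orbit_vector_le)
  then show ?thesis by (simp add: c0_def)
qed

lemma of_nat_div_two_pow_le: "real q / 2 ^ (p + q + 2) \<le> 1 / (4 * (real p + 1))"
proof -
  have "real (p + 1) \<le> real ((2::nat) ^ p)" "real q \<le> real ((2::nat) ^ q)"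
    using less_exp[of p] less_exp[of q] by (simp_all only: of_nat_le_iff)
  then have "real p + 1 \<le> 2 ^ p" "real q \<le> 2 ^ q"
    by simp_all
  then have "4 * (real p + 1) * real q \<le> 4 * 2 ^ p * 2 ^ q"
    by (intro mult_mono) auto
  also have "\<dots> = 2 ^ (p + q + 2)"
    by (simp add: power_add)
  finally show ?thesis
    by (simp add: field_simps)
qed

lemma norm_funpow_orbit_vector_later_window:
  assumes n: "n \<in> hit_times p" and w: "in_window q m (j + n)" and "n < m"
  shows "p < j"
    and "cmod ((wshift (quotient_weights weight_prod) ^^ n) orbit_vector j) \<le> 1 / (4 * (real p + 1))"
proof -
  define t d where "t = j + n - m" and "d = m - n"
  have m: "m \<in> hit_times q" "m \<le> j + n" "j + n < m + q"
    using w by (auto simp: in_window_def)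
  then have "j = d + t" "t < q"
    using \<open>n < m\<close> by (auto simp: t_def d_def)
  note gap = hit_times_gap[OF n m(1) \<open>n < m\<close>, folded d_def]
  show "p < j"
    using gap(1) \<open>j = d + t\<close> by linarith
  have "{d - (p + q + 2)<..j} \<subseteq> {d - (p + q + 2)<..<d + q}"
    using \<open>j = d + t\<close> \<open>t < q\<close> by auto
  with gap(2) have "{d - (p + q + 2)<..j} \<inter> return_times = {}"
    by blast
  then have "weight_prod j = 2 ^ (j - (d - (p + q + 2))) * weight_prod (d - (p + q + 2))"
    by (rule weight_prod_return_free) (use \<open>j = d + t\<close> in linarith)
  moreover have "j - (d - (p + q + 2)) = p + q + 2 + t"
    using gap(1) \<open>j = d + t\<close> by linarith
  ultimately have Wj: "2 ^ (p + q + 2 + t) \<le> weight_prod j"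
    using weight_prod_ge_1[of "d - (p + q + 2)"] by simp
  have "(wshift (quotient_weights weight_prod) ^^ n) orbit_vector j
      = target q t * complex_of_real (weight_prod t / weight_prod j)"
    using weight_prod_pos[of j] weight_prod_pos[of "j + n"]
    by (simp add: funpow_wshift_weight_prod orbit_vector_in_window[OF w] t_def)
  then have "cmod ((wshift (quotient_weights weight_prod) ^^ n) orbit_vector j)
      = cmod (target q t) * (weight_prod t / weight_prod j)"
    using weight_prod_pos[of t] weight_prod_pos[of j] by (simp add: norm_mult norm_divide)
  also have "\<dots> \<le> real q * (2 ^ t / 2 ^ (p + q + 2 + t))"
    using weight_prod_le_pow[of t] Wj weight_prod_pos[of t] weight_prod_pos[of j]
    by (intro mult_mono norm_target_le frac_le) simp_all
  also have "\<dots> = real q / 2 ^ (p + q + 2)"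
    by (simp add: power_add)
  also have "\<dots> \<le> 1 / (4 * (real p + 1))"
    by (rule of_nat_div_two_pow_le)
  finally show "cmod ((wshift (quotient_weights weight_prod) ^^ n) orbit_vector j) \<le> 1 / (4 * (real p + 1))" .
qed

lemma norm_funpow_orbit_vector_sub_target:
  assumes n: "n \<in> hit_times p"
  shows "cmod ((wshift (quotient_weights weight_prod) ^^ n) orbit_vector j - target p j)
    \<le> 1 / (4 * (real p + 1))"
proof (cases "\<exists>q m. in_window q m (j + n)")
  case False
  then have "\<not> in_window p n (j + n)" by blast
  with n have "target p j = 0"
    by (intro target_eq_0) (auto simp: in_window_def)
  with False show ?thesis
    by (simp add: funpow_wshift_weight_prod orbit_vector_outside_windows)
next
  case True
  then obtain q m where w: "in_window q m (j + n)" by blast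
  then have m: "m \<in> hit_times q" "m \<le> j + n" "j + n < m + q"
    by (auto simp: in_window_def)
  consider "m = n" | "n < m" | "m < n" by linarith
  then show ?thesis
  proof cases
    case 1
    then have "q = p" using m(1) n hit_times_index_unique by blast
    with w 1 weight_prod_pos[of j] weight_prod_pos[of "j + n"] show ?thesis
      by (simp add: funpow_wshift_weight_prod orbit_vector_in_window)
  next
    case 2
    with norm_funpow_orbit_vector_later_window[OF n w] show ?thesis
      by (simp add: target_eq_0)
  next
    case 3
    with hit_times_gap(1)[OF m(1) n] m show ?thesis by linarith
  qed
qed

lemma frequently_hypercyclic_weight_prod:
  "frequently_hypercyclic_c0 (wshift (quotient_weights weight_prod))"
  unfolding frequently_hypercyclic_c0_def
proof (intro bexI[of _ orbit_vector] allI impI)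
  let ?B = "wshift (quotient_weights weight_prod)"
  fix V assume V: "c0_open V \<and> V \<noteq> {}"
  then obtain v e where "v \<in> c0" "e > 0"
    and ball: "\<And>y. y \<in> c0 \<Longrightarrow> c0_dist v y < e \<Longrightarrow> y \<in> V"
    unfolding c0_open_def by blast
  obtain q where q: "\<And>t. cmod (target q t - v t) \<le> e / 4" "1 / (4 * (real q + 1)) \<le> e / 4"
    using target_approx[OF \<open>v \<in> c0\<close>, of "e / 4"] \<open>e > 0\<close> by auto
  have "hit_times q \<subseteq> {n. (?B ^^ n) orbit_vector \<in> V}"
  proof
    fix n assume n: "n \<in> hit_times q"
    have "c0_dist v ((?B ^^ n) orbit_vector) \<le> e / 2"
    proof (rule c0_dist_le)
      fix j
      have "cmod (v j - (?B ^^ n) orbit_vector j)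
          \<le> cmod (target q j - v j) + cmod ((?B ^^ n) orbit_vector j - target q j)"
        using norm_triangle_ineq[of "target q j - v j" "(?B ^^ n) orbit_vector j - target q j"]
        by (simp add: norm_minus_commute)
      also have "\<dots> \<le> e / 2"
        using q(1)[of j] norm_funpow_orbit_vector_sub_target[OF n, of j] q(2) by linarith
      finally show "cmod (v j - (?B ^^ n) orbit_vector j) \<le> e / 2" .
    qed
    moreover have "(?B ^^ n) orbit_vector \<in> c0"
      using bounded_quotient_weights_weight_prod orbit_vector_c0 by (rule funpow_wshift_c0)
    ultimately show "n \<in> {n. (?B ^^ n) orbit_vector \<in> V}"
      using ball \<open>e > 0\<close> by simp
  qed
  then have "lower_density (hit_times q) \<le> lower_density {n. (?B ^^ n) orbit_vector \<in> V}"
    by (rule lower_density_mono)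
  with lower_density_hit_times[of q] show "0 < lower_density {n. (?B ^^ n) orbit_vector \<in> V}"
    by simp
qed (rule orbit_vector_c0)

lemma not_upper_D1_transitive_weight_prod:
  "\<not> upper_D1_transitive_c0 (wshift (quotient_weights weight_prod))"
proof (rule not_upper_D1_transitive_quotient_weights)
  fix n assume "n \<in> return_times"
  moreover from this obtain K where "9 * block_scale K \<le> n"
    by (rule return_timesE)
  ultimately show "0 < n \<and> weight_prod n \<le> weight_prod 0"
    using block_scale_pos[of K] by (simp add: weight_prod_return_time)
qed (simp_all add: weight_prod_pos lower_density_return_times)

theorem proposition9p9:
  shows "\<exists>w :: nat \<Rightarrow> complex. bounded (range w) \<and>
           frequently_hypercyclic_c0 (wshift w) \<and>
           \<not> upper_D1_transitive_c0 (wshift w)"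
  using bounded_quotient_weights_weight_prod frequently_hypercyclic_weight_prod
    not_upper_D1_transitive_weight_prod by blast

end
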